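(* Let $I$ be a finite set, $T$ a tree on $I$ with $n$ inner vertices, fix a nice total order on $\mathcal{V}(T)$ with associated edge-labeling $\lambda$, and let $\hat{0}=x_0\lhd x_1\lhd\dots\lhd x_n=T$ be the unique maximal chain of $[\hat{0},T]$ with increasing labels. For $j\in[n]$ let $\mathsf{B}_j$ be the set of atoms $a$ of $[\hat{0},T]$ with $\lambda(\hat{0},a)=j$. Let $i\in[n]$ and, for each $j\in[i]$, let $a_j\in\mathsf{B}_j$. Then $x_i=a_1\vee a_2\vee\dots\vee a_i$.
   Context: A tree on a finite set $I$ is a (non-planar) rooted binary tree whose leaves are bijectively labeled by $I$: vertices are inner vertices (valence $3$) and leaves and the root (valence $1$), edges oriented towards the root; one-leaf trees are allowed. A forest on $I$ is a set of trees whose leaf sets partition $I$; $\mathcal{V}(F)$ is its set of inner vertices. For forests $F,G$ on $I$, $F \leq G$ if there is a continuous map $F\to G$ which (D1) is increasing with respect to orientation towards the root, (D2) maps inner vertices to inner vertices injectively, (D3) is the identity of $I$ on leaves, (D4) is injective on each tree of $F$. This gives the poset $\operatorname{For}(I)$, graded by number of inner vertices, with minimum $\hat{0}$ (no inner vertices); $[\hat{0},T]$ is a lattice with join $\vee$. For $F \leq G \leq T$ inner vertices are regarded as subsets $\mathcal{V}(F)\subseteq\mathcal{V}(G)\subseteq\mathcal{V}(T)$; if $F\lhd G$ there is a unique $v$ with $\mathcal{V}(G)=\mathcal{V}(F)\cup\{v\}$. Partial order on $\mathcal{V}(T)$: $v\preceq v'$ if $v'$ lies on the path between the root and $v$. A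 nice total order is any total order on $\mathcal{V}(T)$ extending $\preceq$; using it the inner vertices are labeled $1,\dots,n$ increasingly and identified with their labels. The edge-labeling is $\lambda(F,G)$ := the unique element of $\mathcal{V}(G)\setminus\mathcal{V}(F)$ for $F\lhd G$ in $[\hat{0},T]$. Atoms are the elements covering $\hat{0}$; a chain is increasing if its sequence of labels is increasing. *)

theory Defs
  imports Main
begin

text \<open>
A forest on a finite set I is encoded by its set of clusters
(leaf sets below each vertex): singletons {x} are the leaves, clusters of
cardinality at least 2 are the inner vertices, the maximal clusters are the
(leaf sets of the) trees; the root of each tree sits above its maximal cluster.
Every edge is identified with its lower endpoint (a cluster).
\<close>

definition forest :: "'a set \<Rightarrow> 'a set set \<Rightarrow> bool" where
  "forest I F \<longleftrightarrow> finite I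
     \<and> (\<forall>C\<in>F. C \<subseteq> I \<and> C \<noteq> {})
     \<and> (\<forall>x\<in>I. {x} \<in> F)
     \<and> (\<forall>C\<in>F. \<forall>D\<in>F. C \<subseteq> D \<or> D \<subseteq> C \<or> C \<inter> D = {})
     \<and> (\<forall>C\<in>F. 2 \<le> card C \<longrightarrow>
           (\<exists>A\<in>F. \<exists>B\<in>F. A \<inter> B = {} \<and> A \<union> B = C \<and> A \<noteq> C \<and> B \<noteq> C))"

definition tree :: "'a set \<Rightarrow> 'a set set \<Rightarrow> bool" where
  "tree I T \<longleftrightarrow> forest I T \<and> I \<in> T"

definition inner_vs :: "'a set set \<Rightarrow> 'a set set" where
  "inner_vs F = {C\<in>F. 2 \<le> card C}"

definition is_parent :: "'a set set \<Rightarrow> 'a set \<Rightarrow> 'a set \<Rightarrow> bool" where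
  "is_parent F C P \<longleftrightarrow> C \<in> F \<and> P \<in> F \<and> C \<subset> P \<and> (\<forall>D\<in>F. C \<subset> D \<longrightarrow> P \<subseteq> D)"

definition same_tree :: "'a set set \<Rightarrow> 'a set \<Rightarrow> 'a set \<Rightarrow> bool" where
  "same_tree F C C' \<longleftrightarrow> (\<exists>D\<in>F. C \<subseteq> D \<and> C' \<subseteq> D)"

text \<open>Image (set of edges of G, each identified by its lower endpoint) of the
  edge of F above C: the path in G from phi C up to phi (parent C), or up to
  the root of G if C is the top vertex of its tree (roots are mapped to roots).\<close>
definition edge_image ::
  "'a set set \<Rightarrow> 'a set set \<Rightarrow> ('a set \<Rightarrow> 'a set) \<Rightarrow> 'a set \<Rightarrow> 'a set set" where
  "edge_image F G \<phi> C = {D\<in>G. \<phi> C \<subseteq> D \<and> (\<forall>P. is_parent F C P \<longrightarrow> D \<subset> \<phi> P)}"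

text \<open>Combinatorial form of a map F \<rightarrow> G satisfying (D1)-(D4).\<close>
definition forest_map ::
  "'a set \<Rightarrow> 'a set set \<Rightarrow> 'a set set \<Rightarrow> ('a set \<Rightarrow> 'a set) \<Rightarrow> bool" where
  "forest_map I F G \<phi> \<longleftrightarrow>
     (\<forall>C\<in>F. \<phi> C \<in> G)
   \<and> (\<forall>x\<in>I. \<phi> {x} = {x})
   \<and> (\<forall>C\<in>inner_vs F. \<phi> C \<in> inner_vs G)
   \<and> inj_on \<phi> (inner_vs F)
   \<and> (\<forall>C P. is_parent F C P \<longrightarrow> \<phi> C \<subset> \<phi> P)
   \<and> (\<forall>C\<in>F. \<forall>C'\<in>F. C \<noteq> C' \<and> same_tree F C C' \<longrightarrow>
         edge_image F G \<phi> C \<inter> edge_image F G \<phi> C' = {})"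

definition forest_le :: "'a set \<Rightarrow> 'a set set \<Rightarrow> 'a set set \<Rightarrow> bool" where
  "forest_le I F G \<longleftrightarrow> forest I F \<and> forest I G \<and> (\<exists>\<phi>. forest_map I F G \<phi>)"

definition bot_forest :: "'a set \<Rightarrow> 'a set set" where
  "bot_forest I = (\<lambda>x. {x}) ` I"

definition interval :: "'a set \<Rightarrow> 'a set set \<Rightarrow> 'a set set set" where
  "interval I T = {F. forest_le I (bot_forest I) F \<and> forest_le I F T}"

definition covers_in :: "'a set \<Rightarrow> 'a set set \<Rightarrow> 'a set set \<Rightarrow> 'a set set \<Rightarrow> bool" where
  "covers_in I T F G \<longleftrightarrow> F \<in> interval I T \<and> G \<in> interval I T \<and> forest_le I F G \<and> F \<noteq> G
     \<and> (\<forall>H\<in>interval I T. forest_le I F H \<and> forest_le I H G \<longrightarrow> H = F \<or> H = G)"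

definition atom_in :: "'a set \<Rightarrow> 'a set set \<Rightarrow> 'a set set \<Rightarrow> bool" where
  "atom_in I T a \<longleftrightarrow> covers_in I T (bot_forest I) a"

text \<open>Inner vertices of F regarded as a subset of V(T) (via the map F \<rightarrow> T).\<close>
definition vT :: "'a set \<Rightarrow> 'a set set \<Rightarrow> 'a set set \<Rightarrow> 'a set set" where
  "vT I T F = (THE S. \<exists>\<phi>. forest_map I F T \<phi> \<and> S = \<phi> ` inner_vs F)"

text \<open>The edge label: the unique element of V(G) - V(F), as a vertex of T.\<close>
definition elabel :: "'a set \<Rightarrow> 'a set set \<Rightarrow> 'a set set \<Rightarrow> 'a set set \<Rightarrow> 'a set" where
  "elabel I T F G = the_elem (vT I T G - vT I T F)"

text \<open>A nice total order on V(T), given by the increasing labelling 1..n: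
  it extends v \<preceq> v' (v' on the path from v to the root, i.e. v \<subseteq> v').\<close>
definition nice_order :: "'a set set \<Rightarrow> ('a set \<Rightarrow> nat) \<Rightarrow> nat \<Rightarrow> bool" where
  "nice_order T lab n \<longleftrightarrow> bij_betw lab (inner_vs T) {1..n}
     \<and> (\<forall>v\<in>inner_vs T. \<forall>v'\<in>inner_vs T. v \<subseteq> v' \<longrightarrow> lab v \<le> lab v')"

definition Bset :: "'a set \<Rightarrow> 'a set set \<Rightarrow> ('a set \<Rightarrow> nat) \<Rightarrow> nat \<Rightarrow> 'a set set set" where
  "Bset I T lab j = {a. atom_in I T a \<and> lab (elabel I T (bot_forest I) a) = j}"

definition join_in :: "'a set \<Rightarrow> 'a set set \<Rightarrow> 'a set set set \<Rightarrow> 'a set set" where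
  "join_in I T S = (THE z. z \<in> interval I T \<and> (\<forall>s\<in>S. forest_le I s z)
      \<and> (\<forall>w\<in>interval I T. (\<forall>s\<in>S. forest_le I s w) \<longrightarrow> forest_le I z w))"

end

theory Submission
  imports Defs
begin

text \<open>
  Every map of forests F \<rightarrow> G sends a cluster C to the least cluster \<open>lca G C\<close> of G containing it,
  so the inner vertices of any \<open>F \<le> T\<close> are identified with the vertices \<open>lca T C\<close> of T.
  In a binary forest a cluster with k leaves contains exactly k - 1 inner vertices, and a set of
  leaves with that many inner vertices of F below it is itself a cluster of F.  Hence a forest
  \<open>F \<le> T\<close> whose vertex set V(F) is an order ideal of V(T) consists of the leaves and V(F), and
  lies below every \<open>G \<le> T\<close> with V(F) \<subseteq> V(G).
  Along the maximal chain every cover adds one vertex of T, and increasing labels force the k-th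
  added vertex to have label k, so V(x_i) is the ideal of labels \<le> i.  An atom in B_j is a
  cherry on two leaves whose least common cluster in T has label j.  So each a_j lies below
  x_i, and every upper bound of a_1, ..., a_i contains V(x_i) and therefore lies above x_i.
\<close>

section \<open>Clusters\<close>

definition splits :: "'a set set \<Rightarrow> 'a set \<Rightarrow> 'a set \<Rightarrow> 'a set \<Rightarrow> bool" where
  "splits F C A B \<longleftrightarrow> A \<in> F \<and> B \<in> F \<and> A \<inter> B = {} \<and> A \<union> B = C \<and> A \<noteq> C \<and> B \<noteq> C"

lemma
  assumes "forest I F"
  shows forest_finite: "finite I"
    and forest_subset: "C \<in> F \<Longrightarrow> C \<subseteq> I"
    and forest_nonempty: "C \<in> F \<Longrightarrow> C \<noteq> {}"
    and forest_singleton: "x \<in> I \<Longrightarrow> {x} \<in> F"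
    and forest_laminar: "C \<in> F \<Longrightarrow> D \<in> F \<Longrightarrow> C \<subseteq> D \<or> D \<subseteq> C \<or> C \<inter> D = {}"
    and forest_splits: "C \<in> F \<Longrightarrow> 2 \<le> card C \<Longrightarrow> \<exists>A B. splits F C A B"
  using assms unfolding forest_def splits_def by simp_all meson

lemma forest_finite_cluster: "forest I F \<Longrightarrow> C \<in> F \<Longrightarrow> finite C"
  using forest_finite forest_subset finite_subset by metis

lemma forest_finite_clusters: "forest I F \<Longrightarrow> finite F"
  by (metis Pow_iff finite_Pow_iff finite_subset forest_finite forest_subset subsetI)

lemma forest_singleton_if_card_less:
  assumes "forest I F" and "C \<in> F" and "\<not> 2 \<le> card C"
  shows "\<exists>x\<in>I. C = {x}"
proof -
  have "finite C" and "C \<noteq> {}"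
    using forest_finite_cluster[OF assms(1,2)] forest_nonempty[OF assms(1,2)] .
  then have "card C = 1" using assms(3) by (simp add: Suc_le_eq card_gt_0_iff le_antisym)
  then obtain x where "C = {x}" using card_1_singletonE by blast
  then show ?thesis using forest_subset[OF assms(1,2)] by blast
qed

lemma forest_eq_bot_Un_inner:
  assumes "forest I F"
  shows "F = bot_forest I \<union> inner_vs F"
proof -
  have "C \<in> bot_forest I" if "C \<in> F" and "\<not> 2 \<le> card C" for C
    using forest_singleton_if_card_less[OF assms that] unfolding bot_forest_def by blast
  then show ?thesis
    unfolding bot_forest_def inner_vs_def using forest_singleton[OF assms] by blast
qed

lemma splits_sym: "splits F C A B \<Longrightarrow> splits F C B A"
  unfolding splits_def by blast

lemma splits_card_less:
  "forest I F \<Longrightarrow> C \<in> F \<Longrightarrow> splits F C A B \<Longrightarrow> card A < card C"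
  unfolding splits_def by (meson forest_finite_cluster psubsetI psubset_card_mono sup_ge1)

lemma splits_card_eq:
  "forest I F \<Longrightarrow> C \<in> F \<Longrightarrow> splits F C A B \<Longrightarrow> card C = card A + card B"
  unfolding splits_def by (metis card_Un_disjoint forest_finite_cluster)

lemma subset_child_if_splits:
  assumes "forest I F" and "splits F C A B" and "D \<in> F" and "D \<subset> C"
  shows "D \<subseteq> A \<or> D \<subseteq> B"
proof -
  have "A \<in> F" "B \<in> F" "A \<union> B = C" "A \<inter> B = {}" using assms(2) unfolding splits_def by auto
  moreover have "D \<noteq> {}" "A \<noteq> {}" "B \<noteq> {}"
    using forest_nonempty[OF assms(1)] assms(3) \<open>A \<in> F\<close> \<open>B \<in> F\<close> by auto
  ultimately show ?thesis
    using forest_laminar[OF assms(1) assms(3) \<open>A \<in> F\<close>] forest_laminar[OF assms(1) assms(3) \<open>B \<in> F\<close>]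
      assms(4) by blast
qed

lemma is_parent_if_splits:
  assumes "forest I F" and "C \<in> F" and "splits F C A B"
  shows "is_parent F A C"
proof -
  have A: "A \<in> F" "A \<noteq> C" and AB: "A \<union> B = C" "A \<inter> B = {}"
    using assms(3) unfolding splits_def by auto
  have "A \<noteq> {}" using forest_nonempty[OF assms(1) A(1)] .
  have "C \<subseteq> D" if "D \<in> F" and "A \<subset> D" for D
  proof -
    have "\<not> D \<subset> C"
    proof
      assume "D \<subset> C"
      then have "D \<subseteq> A \<or> D \<subseteq> B" using subset_child_if_splits[OF assms(1,3) \<open>D \<in> F\<close>] by blast
      then show False using \<open>A \<subset> D\<close> AB \<open>A \<noteq> {}\<close> by blast
    qed
    then show ?thesis
      using forest_laminar[OF assms(1) \<open>D \<in> F\<close> assms(2)] \<open>A \<subset> D\<close> \<open>A \<noteq> {}\<close> AB by blast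
  qed
  then show ?thesis unfolding is_parent_def using A AB assms(2) by blast
qed

lemma is_parent_unique: "is_parent F C P \<Longrightarrow> is_parent F C P' \<Longrightarrow> P = P'"
  unfolding is_parent_def by blast

lemma forest_least_cluster:
  assumes F: "forest I F" and "C \<noteq> {}" and "S \<subseteq> F" and "S \<noteq> {}" and "\<And>D. D \<in> S \<Longrightarrow> C \<subseteq> D"
  obtains M where "M \<in> S" and "\<And>D. D \<in> S \<Longrightarrow> M \<subseteq> D"
proof -
  have "finite S" using finite_subset[OF assms(3) forest_finite_clusters[OF F]] .
  then obtain M where M: "M \<in> S" and min: "\<forall>D\<in>S. D \<subseteq> M \<longrightarrow> M = D"
    using finite_has_minimal[of S] assms(4) by blast
  have "M \<subseteq> D" if "D \<in> S" for D
  proof -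
    have "M \<subseteq> D \<or> D \<subseteq> M \<or> M \<inter> D = {}" using forest_laminar[OF F] M that assms(3) by blast
    then show ?thesis using min that M assms(2,5) by blast
  qed
  then show thesis using that M by blast
qed

lemma is_parent_exists:
  assumes F: "forest I F" and "C \<in> F" and "E \<in> F" and "C \<subset> E"
  shows "\<exists>P. is_parent F C P \<and> P \<subseteq> E"
proof -
  obtain P where "P \<in> {D\<in>F. C \<subset> D}" and "\<And>D. D \<in> {D\<in>F. C \<subset> D} \<Longrightarrow> P \<subseteq> D"
    using forest_least_cluster[OF F forest_nonempty[OF F assms(2)], of "{D\<in>F. C \<subset> D}"] assms(3,4)
    by blast
  then show ?thesis unfolding is_parent_def using assms(2-4) by blast
qed

lemma child_if_is_parent:
  assumes "forest I F" and "is_parent F C P" and "splits F P A B"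
  shows "C = A \<or> C = B"
proof -
  have "C \<in> F" "C \<subset> P" and least: "\<forall>D\<in>F. C \<subset> D \<longrightarrow> P \<subseteq> D"
    using assms(2) unfolding is_parent_def by auto
  moreover have "A \<in> F" "B \<in> F" "A \<noteq> P" "B \<noteq> P" "A \<union> B = P"
    using assms(3) unfolding splits_def by auto
  ultimately have "C \<subseteq> A \<or> C \<subseteq> B" using subset_child_if_splits[OF assms(1,3)] by blast
  then show ?thesis using least \<open>A \<in> F\<close> \<open>B \<in> F\<close> \<open>A \<noteq> P\<close> \<open>B \<noteq> P\<close> \<open>A \<union> B = P\<close>
    by (metis Un_upper1 Un_upper2 psubsetI subset_antisym)
qed

definition lca :: "'a set set \<Rightarrow> 'a set \<Rightarrow> 'a set" where
  "lca G C = \<Inter>{D\<in>G. C \<subseteq> D}"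

lemma
  assumes "forest I G" and "C \<noteq> {}" and "D\<^sub>0 \<in> G" and "C \<subseteq> D\<^sub>0"
  shows lca_mem: "lca G C \<in> G"
    and subset_lca: "C \<subseteq> lca G C"
    and lca_le: "D \<in> G \<Longrightarrow> C \<subseteq> D \<Longrightarrow> lca G C \<subseteq> D"
proof -
  obtain M where M: "M \<in> {D\<in>G. C \<subseteq> D}" and least: "\<And>D. D \<in> {D\<in>G. C \<subseteq> D} \<Longrightarrow> M \<subseteq> D"
    using forest_least_cluster[OF assms(1,2), of "{D\<in>G. C \<subseteq> D}"] assms(3,4) by blast
  then have "lca G C = M" unfolding lca_def by blast
  then show "lca G C \<in> G" "C \<subseteq> lca G C" "D \<in> G \<Longrightarrow> C \<subseteq> D \<Longrightarrow> lca G C \<subseteq> D"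
    using M least by auto
qed

lemma lca_eq_if_least:
  assumes "forest I G" and "H \<in> G" and "C \<subseteq> H" and "C \<noteq> {}"
    and "\<And>D. D \<in> G \<Longrightarrow> C \<subseteq> D \<Longrightarrow> H \<subseteq> D"
  shows "lca G C = H"
  using lca_le[OF assms(1,4,2,3) assms(2,3)]
    assms(5)[OF lca_mem[OF assms(1,4,2,3)] subset_lca[OF assms(1,4,2,3)]] by (rule subset_antisym)

section \<open>Forest maps\<close>

lemma forest_mapD:
  assumes "forest_map I F G \<phi>"
  shows "C \<in> F \<Longrightarrow> \<phi> C \<in> G"
    and "x \<in> I \<Longrightarrow> \<phi> {x} = {x}"
    and "C \<in> inner_vs F \<Longrightarrow> \<phi> C \<in> inner_vs G"
    and "inj_on \<phi> (inner_vs F)"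
    and "is_parent F C P \<Longrightarrow> \<phi> C \<subset> \<phi> P"
    and "C \<in> F \<Longrightarrow> C' \<in> F \<Longrightarrow> C \<noteq> C' \<Longrightarrow> same_tree F C C'
      \<Longrightarrow> edge_image F G \<phi> C \<inter> edge_image F G \<phi> C' = {}"
  using assms unfolding forest_map_def by simp_all

text \<open>The clusters of G from \<open>\<phi> A\<close> up to (excluding) \<open>\<phi> D\<close> lie on the image of the edge
  above the child A, and likewise for B; by (D4) these images are disjoint.\<close>
lemma forest_map_no_cluster_across_children:
  assumes F: "forest I F" and G: "forest I G" and \<phi>: "forest_map I F G \<phi>"
    and "D \<in> F" and s: "splits F D A B" and "A \<subseteq> \<phi> A" and "B \<subseteq> \<phi> B"
    and "E \<in> G" and "E \<subset> \<phi> D"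
  shows "E \<inter> A = {} \<or> E \<inter> B = {}"
proof (rule ccontr)
  assume meets: "\<not> (E \<inter> A = {} \<or> E \<inter> B = {})"
  have A: "A \<in> F" and B: "B \<in> F" and "A \<inter> B = {}" and "A \<union> B = D"
    using s unfolding splits_def by auto
  then have "A \<noteq> B" using forest_nonempty[OF F A] by blast
  moreover have "same_tree F A B" unfolding same_tree_def using \<open>D \<in> F\<close> \<open>A \<union> B = D\<close> by blast
  ultimately have disj: "edge_image F G \<phi> A \<inter> edge_image F G \<phi> B = {}"
    using forest_mapD(6)[OF \<phi> A B] by blast
  have par: "is_parent F A D" "is_parent F B D"
    using is_parent_if_splits[OF F \<open>D \<in> F\<close>] s splits_sym by blast+
  have edge: "X \<in> edge_image F G \<phi> C"
    if "is_parent F C D" "X \<in> G" "\<phi> C \<subseteq> X" "X \<subset> \<phi> D" for C X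
    unfolding edge_image_def using that is_parent_unique[OF that(1)] by blast
  have "\<phi> A \<in> G" "\<phi> B \<in> G" using forest_mapD(1)[OF \<phi>] A B by auto
  have "\<phi> A \<subset> \<phi> D" "\<phi> B \<subset> \<phi> D" using forest_mapD(5)[OF \<phi>] par by auto
  have EA: "E \<subseteq> \<phi> A \<or> \<phi> A \<subseteq> E"
    using forest_laminar[OF G \<open>E \<in> G\<close> \<open>\<phi> A \<in> G\<close>] meets \<open>A \<subseteq> \<phi> A\<close> by blast
  have EB: "E \<subseteq> \<phi> B \<or> \<phi> B \<subseteq> E"
    using forest_laminar[OF G \<open>E \<in> G\<close> \<open>\<phi> B \<in> G\<close>] meets \<open>B \<subseteq> \<phi> B\<close> by blast
  show False
  proof (cases "\<phi> A \<subseteq> E \<and> \<phi> B \<subseteq> E")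
    case True
    then show False
      using edge[OF par(1) \<open>E \<in> G\<close>] edge[OF par(2) \<open>E \<in> G\<close>] \<open>E \<subset> \<phi> D\<close> disj by blast
  next
    case False
    then have "\<phi> A \<inter> \<phi> B \<noteq> {}" using EA EB meets \<open>A \<subseteq> \<phi> A\<close> \<open>B \<subseteq> \<phi> B\<close> by blast
    then have "\<phi> A \<subseteq> \<phi> B \<or> \<phi> B \<subseteq> \<phi> A"
      using forest_laminar[OF G \<open>\<phi> A \<in> G\<close> \<open>\<phi> B \<in> G\<close>] by blast
    then show False
      using edge[OF par(1) \<open>\<phi> B \<in> G\<close>] edge[OF par(2) \<open>\<phi> B \<in> G\<close>]
        edge[OF par(1) \<open>\<phi> A \<in> G\<close>] edge[OF par(2) \<open>\<phi> A \<in> G\<close>]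
        \<open>\<phi> A \<subset> \<phi> D\<close> \<open>\<phi> B \<subset> \<phi> D\<close> disj by blast
  qed
qed

lemma forest_map_eq_lca:
  assumes F: "forest I F" and G: "forest I G" and \<phi>: "forest_map I F G \<phi>"
  shows "C \<in> F \<Longrightarrow> C \<subseteq> \<phi> C \<and> \<phi> C = lca G C"
proof (induction "card C" arbitrary: C rule: less_induct)
  case less
  show ?case
  proof (cases "2 \<le> card C")
    case False
    then obtain x where "x \<in> I" "C = {x}" using forest_singleton_if_card_less[OF F less.prems] by blast
    moreover have "lca G {x} = {x}"
      using lca_eq_if_least[OF G forest_singleton[OF G \<open>x \<in> I\<close>]] by blast
    ultimately show ?thesis using forest_mapD(2)[OF \<phi>] by simp
  next
    case True
    obtain A B where s: "splits F C A B" using forest_splits[OF F less.prems True] by blast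
    have A: "A \<in> F" and B: "B \<in> F" and "A \<union> B = C"
      using s unfolding splits_def by auto
    have "A \<subseteq> \<phi> A" "B \<subseteq> \<phi> B"
      using less.hyps splits_card_less[OF F less.prems] s splits_sym A B by blast+
    moreover have "\<phi> A \<subset> \<phi> C" "\<phi> B \<subset> \<phi> C"
      using forest_mapD(5)[OF \<phi>] is_parent_if_splits[OF F less.prems] s splits_sym by blast+
    ultimately have "C \<subseteq> \<phi> C" using \<open>A \<union> B = C\<close> by blast
    have "\<phi> C \<in> G" using forest_mapD(1)[OF \<phi> less.prems] .
    have "C \<noteq> {}" using forest_nonempty[OF F less.prems] .
    have "\<phi> C \<subseteq> D" if "D \<in> G" and "C \<subseteq> D" for D
    proof (rule ccontr)
      assume "\<not> \<phi> C \<subseteq> D"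
      then have "D \<subset> \<phi> C"
        using forest_laminar[OF G \<open>D \<in> G\<close> \<open>\<phi> C \<in> G\<close>] \<open>C \<subseteq> D\<close> \<open>C \<subseteq> \<phi> C\<close> \<open>C \<noteq> {}\<close> by blast
      then have "D \<inter> A = {} \<or> D \<inter> B = {}"
        using forest_map_no_cluster_across_children[OF F G \<phi> less.prems s \<open>A \<subseteq> \<phi> A\<close> \<open>B \<subseteq> \<phi> B\<close> \<open>D \<in> G\<close>]
        by blast
      then show False
        using \<open>C \<subseteq> D\<close> \<open>A \<union> B = C\<close> forest_nonempty[OF F A] forest_nonempty[OF F B] by blast
    qed
    then have "lca G C = \<phi> C" using lca_eq_if_least[OF G \<open>\<phi> C \<in> G\<close> \<open>C \<subseteq> \<phi> C\<close> \<open>C \<noteq> {}\<close>] by blast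
    then show ?thesis using \<open>C \<subseteq> \<phi> C\<close> by simp
  qed
qed

lemma forest_leD: "forest_le I F G \<Longrightarrow> forest I F" "forest_le I F G \<Longrightarrow> forest I G"
  unfolding forest_le_def by auto

lemma forest_map_cong:
  assumes "forest I F" and "forest_map I F G \<phi>" and "\<And>C. C \<in> F \<Longrightarrow> \<phi> C = \<psi> C"
  shows "forest_map I F G \<psi>"
proof -
  have parent: "C \<in> F" "P \<in> F" if "is_parent F C P" for C P using that unfolding is_parent_def by auto
  have "inner_vs F \<subseteq> F" unfolding inner_vs_def by blast
  have "edge_image F G \<phi> C = edge_image F G \<psi> C" if "C \<in> F" for C
    unfolding edge_image_def using assms(3) that parent by metis
  moreover have "inj_on \<psi> (inner_vs F)"
    using forest_mapD(4)[OF assms(2)] assms(3) \<open>inner_vs F \<subseteq> F\<close> inj_on_cong by (metis subsetD)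
  moreover have "\<phi> {x} = \<psi> {x}" if "x \<in> I" for x
    using assms(3) forest_singleton[OF assms(1) that] by blast
  ultimately show ?thesis
    unfolding forest_map_def
  proof (intro conjI ballI allI impI)
    show "\<psi> C \<in> G" if "C \<in> F" for C
      using forest_mapD(1)[OF assms(2) that] assms(3)[OF that] by simp
    show "\<psi> C \<in> inner_vs G" if "C \<in> inner_vs F" for C
      using forest_mapD(3)[OF assms(2) that] assms(3) that \<open>inner_vs F \<subseteq> F\<close> by auto
    show "\<psi> C \<subset> \<psi> P" if "is_parent F C P" for C P
      using forest_mapD(5)[OF assms(2) that] assms(3) parent[OF that] by simp
  qed (use forest_mapD(2,6)[OF assms(2)] in auto)
qed

lemma forest_le_forest_map_lca:
  assumes "forest_le I F G"
  shows "forest_map I F G (lca G)"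
proof -
  obtain \<phi> where \<phi>: "forest_map I F G \<phi>" using assms unfolding forest_le_def by blast
  show ?thesis
    using forest_map_cong[OF forest_leD(1)[OF assms] \<phi>] forest_map_eq_lca[OF forest_leD[OF assms] \<phi>] by blast
qed

lemma
  assumes "forest_le I F G"
  shows forest_le_lca_mem: "C \<in> F \<Longrightarrow> lca G C \<in> G"
    and forest_le_subset_lca: "C \<in> F \<Longrightarrow> C \<subseteq> lca G C"
    and forest_le_lca_inner: "C \<in> inner_vs F \<Longrightarrow> lca G C \<in> inner_vs G"
    and forest_le_inj_on_lca: "inj_on (lca G) (inner_vs F)"
  using forest_mapD(1,3,4)[OF forest_le_forest_map_lca[OF assms]]
    forest_map_eq_lca[OF forest_leD[OF assms] forest_le_forest_map_lca[OF assms]] by blast+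

lemma finite_inner_vs: "forest I F \<Longrightarrow> finite (inner_vs F)"
  unfolding inner_vs_def by (simp add: forest_finite_clusters)

lemma card_inner_vs_le: "forest_le I F G \<Longrightarrow> card (inner_vs F) \<le> card (inner_vs G)"
  using card_inj_on_le[OF forest_le_inj_on_lca _ finite_inner_vs[OF forest_leD(2)]]
    forest_le_lca_inner by blast

lemma Un_eq_parent_if_siblings:
  assumes F: "forest I F" and "is_parent F C P" and "is_parent F C' P" and "C \<noteq> C'"
  shows "C \<union> C' = P"
proof -
  have "P \<in> F" "C \<in> F" "C \<subset> P" using assms(2) unfolding is_parent_def by auto
  then have "2 \<le> card P"
    using forest_singleton_if_card_less[OF F] forest_nonempty[OF F] by (metis subset_singletonD psubset_eq)
  then obtain A B where s: "splits F P A B" using forest_splits[OF F \<open>P \<in> F\<close>] by blast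
  then have "C = A \<or> C = B" "C' = A \<or> C' = B" using child_if_is_parent[OF F] assms(2,3) by blast+
  then show ?thesis using s assms(4) unfolding splits_def by auto
qed

lemma edge_image_id_disjoint:
  assumes F: "forest I F" and C: "C \<in> F" and C': "C' \<in> F" and "C \<noteq> C'" and "same_tree F C C'"
  shows "edge_image F G id C \<inter> edge_image F G id C' = {}"
proof (rule ccontr)
  assume "edge_image F G id C \<inter> edge_image F G id C' \<noteq> {}"
  then obtain X where "C \<subseteq> X" "C' \<subseteq> X"
    and below: "\<And>P. is_parent F C P \<Longrightarrow> X \<subset> P" and below': "\<And>P. is_parent F C' P \<Longrightarrow> X \<subset> P"
    unfolding edge_image_def by auto
  have "C \<noteq> {}" "C' \<noteq> {}" using forest_nonempty[OF F] C C' by auto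
  consider "C \<subset> C'" | "C' \<subset> C" | "C \<inter> C' = {}"
    using forest_laminar[OF F C C'] \<open>C \<noteq> C'\<close> by blast
  then show False
  proof cases
    case 1
    then obtain P where "is_parent F C P" "P \<subseteq> C'" using is_parent_exists[OF F C C'] by blast
    then show False using below \<open>C' \<subseteq> X\<close> by blast
  next
    case 2
    then obtain P where "is_parent F C' P" "P \<subseteq> C" using is_parent_exists[OF F C' C] by blast
    then show False using below' \<open>C \<subseteq> X\<close> by blast
  next
    case 3
    obtain E where "E \<in> F" "C \<subseteq> E" "C' \<subseteq> E" using assms(5) unfolding same_tree_def by blast
    then have "C \<subset> E" "C' \<subset> E" using 3 \<open>C \<noteq> {}\<close> \<open>C' \<noteq> {}\<close> by blast+
    then obtain P P' where P: "is_parent F C P" and P': "is_parent F C' P'"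
      using is_parent_exists[OF F C \<open>E \<in> F\<close>] is_parent_exists[OF F C' \<open>E \<in> F\<close>] by blast
    have "C' \<subset> P" "C \<subset> P'" using below[OF P] below'[OF P'] \<open>C \<subseteq> X\<close> \<open>C' \<subseteq> X\<close> by blast+
    then have "P' \<subseteq> P" "P \<subseteq> P'" using P P' unfolding is_parent_def by blast+
    then have "C \<union> C' = P" using Un_eq_parent_if_siblings[OF F P _ \<open>C \<noteq> C'\<close>] P' by simp
    then show False using below[OF P] \<open>C \<subseteq> X\<close> \<open>C' \<subseteq> X\<close> by blast
  qed
qed

lemma forest_le_if_subset:
  assumes F: "forest I F" and G: "forest I G" and "F \<subseteq> G"
  shows "forest_le I F G"
proof -
  have "forest_map I F G id"
    unfolding forest_map_def
    using assms edge_image_id_disjoint[OF F] unfolding inner_vs_def is_parent_def by auto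
  then show ?thesis unfolding forest_le_def using F G by blast
qed

lemma forest_bot_forest: "finite I \<Longrightarrow> forest I (bot_forest I)"
  unfolding forest_def bot_forest_def by auto

lemma inner_vs_bot_forest: "inner_vs (bot_forest I) = {}"
  unfolding inner_vs_def bot_forest_def by auto

lemma bot_forest_le: "forest I G \<Longrightarrow> forest_le I (bot_forest I) G"
  using forest_le_if_subset forest_bot_forest forest_finite forest_eq_bot_Un_inner by (metis sup_ge1)

section \<open>Counting inner vertices\<close>

definition inner_count :: "'a set set \<Rightarrow> 'a set \<Rightarrow> nat" where
  "inner_count F S = card {C \<in> inner_vs F. C \<subseteq> S}"

lemma finite_inner_below: "forest I F \<Longrightarrow> finite {C \<in> inner_vs F. C \<subseteq> S}"
  by (simp add: finite_inner_vs)

lemma inner_below_splits: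
  assumes F: "forest I F" and "D \<in> F" and "2 \<le> card D" and s: "splits F D A B"
  shows "{C \<in> inner_vs F. C \<subseteq> D} = insert D ({C \<in> inner_vs F. C \<subseteq> A} \<union> {C \<in> inner_vs F. C \<subseteq> B})"
proof -
  have "D \<in> inner_vs F" unfolding inner_vs_def using assms by blast
  moreover have "C \<subseteq> A \<or> C \<subseteq> B" if "C \<in> inner_vs F" "C \<subseteq> D" "C \<noteq> D" for C
    using subset_child_if_splits[OF F s, of C] that unfolding inner_vs_def by blast
  moreover have "A \<subseteq> D" "B \<subseteq> D" using s unfolding splits_def by auto
  ultimately show ?thesis by blast
qed

lemma card_eq_inner_count:
  assumes F: "forest I F"
  shows "D \<in> F \<Longrightarrow> card D = inner_count F D + 1"
proof (induction "card D" arbitrary: D rule: less_induct)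
  case less
  show ?case
  proof (cases "2 \<le> card D")
    case False
    have "\<not> C \<subseteq> D" if "C \<in> inner_vs F" for C
      using that False card_mono[OF forest_finite_cluster[OF F less.prems], of C]
      unfolding inner_vs_def by auto
    then have "{C \<in> inner_vs F. C \<subseteq> D} = {}" by blast
    then show ?thesis
      using False forest_singleton_if_card_less[OF F less.prems] unfolding inner_count_def by auto
  next
    case True
    obtain A B where s: "splits F D A B" using forest_splits[OF F less.prems True] by blast
    have A: "A \<in> F" "A \<noteq> D" and B: "B \<in> F" "B \<noteq> D" and "A \<inter> B = {}" "A \<union> B = D"
      using s unfolding splits_def by auto
    have "{C \<in> inner_vs F. C \<subseteq> A} \<inter> {C \<in> inner_vs F. C \<subseteq> B} = {}"
      using \<open>A \<inter> B = {}\<close> forest_nonempty[OF F] unfolding inner_vs_def by blast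
    then have "card ({C \<in> inner_vs F. C \<subseteq> A} \<union> {C \<in> inner_vs F. C \<subseteq> B})
        = inner_count F A + inner_count F B"
      unfolding inner_count_def by (simp add: card_Un_disjoint finite_inner_below[OF F])
    moreover have "D \<notin> {C \<in> inner_vs F. C \<subseteq> A} \<union> {C \<in> inner_vs F. C \<subseteq> B}"
      using A B \<open>A \<union> B = D\<close> by blast
    ultimately have "inner_count F D = inner_count F A + inner_count F B + 1"
      unfolding inner_count_def inner_below_splits[OF F less.prems True s]
      by (simp add: finite_inner_below[OF F])
    moreover have "card A = inner_count F A + 1"
      using less.hyps[OF splits_card_less[OF F less.prems s] A(1)] .
    moreover have "card B = inner_count F B + 1"
      using less.hyps[OF splits_card_less[OF F less.prems splits_sym[OF s]] B(1)] .
    ultimately show ?thesis using splits_card_eq[OF F less.prems s] by simp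
  qed
qed

text \<open>Take C maximal among the clusters inside S through a fixed point of S: by laminarity every
  inner vertex inside S then lies inside C or inside S - C.\<close>
lemma inner_count_le_if_not_mem:
  assumes F: "forest I F" and "S \<subseteq> I" and "S \<noteq> {}" and "S \<notin> F"
  obtains C where "C \<in> F" and "C \<subset> S"
    and "inner_count F S \<le> inner_count F C + inner_count F (S - C)"
proof -
  obtain x where "x \<in> S" using assms(3) by blast
  let ?Q = "{C \<in> F. x \<in> C \<and> C \<subseteq> S}"
  have "{x} \<in> ?Q" using forest_singleton[OF F] \<open>x \<in> S\<close> assms(2) by blast
  moreover have "finite ?Q" using forest_finite_clusters[OF F] by simp
  ultimately obtain C where C: "C \<in> ?Q" and max: "\<forall>D\<in>?Q. C \<subseteq> D \<longrightarrow> C = D"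
    using finite_has_maximal[of ?Q] by blast
  have "C \<subset> S" using C assms(4) by blast
  have "{D \<in> inner_vs F. D \<subseteq> S} \<subseteq> {D \<in> inner_vs F. D \<subseteq> C} \<union> {D \<in> inner_vs F. D \<subseteq> S - C}"
  proof
    fix D assume D: "D \<in> {D \<in> inner_vs F. D \<subseteq> S}"
    then have "D \<in> F" unfolding inner_vs_def by blast
    then have "D \<subseteq> C \<or> C \<subseteq> D \<or> D \<inter> C = {}" using forest_laminar[OF F] C by blast
    moreover have "C \<subseteq> D \<Longrightarrow> C = D" using max \<open>D \<in> F\<close> C D by blast
    ultimately show "D \<in> {D \<in> inner_vs F. D \<subseteq> C} \<union> {D \<in> inner_vs F. D \<subseteq> S - C}" using D by blast
  qed
  then have "inner_count F S \<le> card ({D \<in> inner_vs F. D \<subseteq> C} \<union> {D \<in> inner_vs F. D \<subseteq> S - C})"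
    unfolding inner_count_def by (simp add: card_mono finite_inner_below[OF F])
  also have "\<dots> \<le> inner_count F C + inner_count F (S - C)"
    unfolding inner_count_def by (rule card_Un_le)
  finally have "inner_count F S \<le> inner_count F C + inner_count F (S - C)" .
  then show thesis using that[of C] C \<open>C \<subset> S\<close> by simp
qed

lemma card_eq_card_add_card_Diff:
  "finite S \<Longrightarrow> C \<subseteq> S \<Longrightarrow> card S = card C + card (S - C)"
  using card_mono[of S C] card_Diff_subset[OF finite_subset, of C S] by simp

lemma inner_count_less_card:
  assumes F: "forest I F"
  shows "S \<subseteq> I \<Longrightarrow> S \<noteq> {} \<Longrightarrow> inner_count F S < card S"
proof (induction "card S" arbitrary: S rule: less_induct)
  case less
  show ?case
  proof (cases "S \<in> F")
    case True
    then show ?thesis using card_eq_inner_count[OF F] by simp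
  next
    case False
    then obtain C where "C \<in> F" "C \<subset> S" and le: "inner_count F S \<le> inner_count F C + inner_count F (S - C)"
      using inner_count_le_if_not_mem[OF F less.prems] by blast
    have "finite S" using finite_subset[OF less.prems(1) forest_finite[OF F]] .
    have "card S = card C + card (S - C)"
      using card_eq_card_add_card_Diff[OF \<open>finite S\<close>] \<open>C \<subset> S\<close> by simp
    moreover have "card C > 0" "card (S - C) > 0"
      using forest_nonempty[OF F \<open>C \<in> F\<close>] \<open>C \<subset> S\<close> \<open>finite S\<close> finite_subset[of C S]
      by (auto simp: card_gt_0_iff)
    moreover have "C \<subseteq> I" "C \<noteq> {}" "S - C \<subseteq> I" "S - C \<noteq> {}"
      using \<open>C \<subset> S\<close> less.prems forest_nonempty[OF F \<open>C \<in> F\<close>] by auto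
    ultimately have "inner_count F C < card C" "inner_count F (S - C) < card (S - C)"
      using less.hyps[of C] less.hyps[of "S - C"] by simp_all
    then show ?thesis using le \<open>card S = card C + card (S - C)\<close> by linarith
  qed
qed

lemma mem_forest_if_card_le_inner_count:
  assumes F: "forest I F" and "S \<subseteq> I" and "S \<noteq> {}" and card: "card S \<le> inner_count F S + 1"
  shows "S \<in> F"
proof (rule ccontr)
  assume "S \<notin> F"
  then obtain C where "C \<in> F" "C \<subset> S" and le: "inner_count F S \<le> inner_count F C + inner_count F (S - C)"
    using inner_count_le_if_not_mem[OF assms(1-3)] by blast
  have "finite S" using finite_subset[OF assms(2) forest_finite[OF F]] .
  have "card S = card C + card (S - C)"
    using card_eq_card_add_card_Diff[OF \<open>finite S\<close>] \<open>C \<subset> S\<close> by simp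
  moreover have "card C = inner_count F C + 1" using card_eq_inner_count[OF F \<open>C \<in> F\<close>] .
  moreover have "S - C \<subseteq> I" "S - C \<noteq> {}" using \<open>C \<subset> S\<close> assms(2) by auto
  then have "inner_count F (S - C) < card (S - C)" by (rule inner_count_less_card[OF F])
  ultimately show False using le card by linarith
qed

lemma mem_forest_if_inner_below_covered:
  assumes FH: "forest_le I F H" and G: "forest I G" and "D \<in> G"
    and cover: "{E \<in> inner_vs G. E \<subseteq> D} \<subseteq> lca H ` inner_vs F"
  shows "D \<in> F"
proof -
  have F: "forest I F" using forest_leD(1)[OF FH] .
  have "{E \<in> inner_vs G. E \<subseteq> D} \<subseteq> lca H ` {C \<in> inner_vs F. C \<subseteq> D}"
  proof
    fix E assume E: "E \<in> {E \<in> inner_vs G. E \<subseteq> D}"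
    then obtain C where "C \<in> inner_vs F" "E = lca H C" using cover by blast
    moreover have "C \<subseteq> lca H C"
      using forest_le_subset_lca[OF FH] \<open>C \<in> inner_vs F\<close> unfolding inner_vs_def by blast
    ultimately show "E \<in> lca H ` {C \<in> inner_vs F. C \<subseteq> D}" using E by auto
  qed
  then have "inner_count G D \<le> card (lca H ` {C \<in> inner_vs F. C \<subseteq> D})"
    unfolding inner_count_def by (simp add: card_mono finite_inner_below[OF F])
  also have "\<dots> \<le> inner_count F D"
    unfolding inner_count_def by (rule card_image_le[OF finite_inner_below[OF F]])
  finally have "card D \<le> inner_count F D + 1"
    using card_eq_inner_count[OF G \<open>D \<in> G\<close>] by simp
  then show ?thesis
    using mem_forest_if_card_le_inner_count[OF F forest_subset[OF G \<open>D \<in> G\<close>] forest_nonempty[OF G \<open>D \<in> G\<close>]]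
    by blast
qed

lemma forest_eq_if_card_inner_vs_eq:
  assumes FG: "forest_le I F G" and card: "card (inner_vs F) = card (inner_vs G)"
  shows "F = G"
proof -
  have F: "forest I F" and G: "forest I G" using forest_leD[OF FG] .
  have "lca G ` inner_vs F \<subseteq> inner_vs G" using forest_le_lca_inner[OF FG] by blast
  moreover have "card (lca G ` inner_vs F) = card (inner_vs G)"
    using card_image[OF forest_le_inj_on_lca[OF FG]] card by simp
  ultimately have image: "lca G ` inner_vs F = inner_vs G"
    using card_subset_eq[OF finite_inner_vs[OF G]] by blast
  have "D \<in> F" if "D \<in> inner_vs G" for D
  proof (rule mem_forest_if_inner_below_covered[OF FG G])
    show "D \<in> G" using that unfolding inner_vs_def by simp
    show "{E \<in> inner_vs G. E \<subseteq> D} \<subseteq> lca G ` inner_vs F" using image by blast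
  qed
  then have "inner_vs G \<subseteq> inner_vs F" unfolding inner_vs_def by blast
  then have "inner_vs G = inner_vs F"
    using card_subset_eq[OF finite_inner_vs[OF F]] card by simp
  then show ?thesis using forest_eq_bot_Un_inner[OF F] forest_eq_bot_Un_inner[OF G] by simp
qed

lemma forest_le_antisym:
  assumes "forest_le I F G" and "forest_le I G F"
  shows "F = G"
  using forest_eq_if_card_inner_vs_eq[OF assms(1)]
    card_inner_vs_le[OF assms(1)] card_inner_vs_le[OF assms(2)] by simp

section \<open>Cherries and atoms\<close>

definition cherry :: "'a set \<Rightarrow> 'a \<Rightarrow> 'a \<Rightarrow> 'a set set" where
  "cherry I p q = insert {p, q} (bot_forest I)"

lemma forest_cherry:
  assumes "finite I" and "p \<in> I" and "q \<in> I" and "p \<noteq> q"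
  shows "forest I (cherry I p q)"
proof -
  have cases: "C = {p, q} \<or> (\<exists>x\<in>I. C = {x})" if "C \<in> cherry I p q" for C
    using that unfolding cherry_def bot_forest_def by blast
  have "splits (cherry I p q) {p, q} {p} {q}"
    using assms unfolding splits_def cherry_def bot_forest_def by auto
  moreover have "C = {p, q}" if "C \<in> cherry I p q" and "2 \<le> card C" for C
    using cases[OF that(1)] that(2) by auto
  ultimately have "\<exists>A\<in>cherry I p q. \<exists>B\<in>cherry I p q. A \<inter> B = {} \<and> A \<union> B = C \<and> A \<noteq> C \<and> B \<noteq> C"
    if "C \<in> cherry I p q" and "2 \<le> card C" for C
    using that unfolding splits_def by metis
  moreover have "C \<subseteq> D \<or> D \<subseteq> C \<or> C \<inter> D = {}" if "C \<in> cherry I p q" "D \<in> cherry I p q" for C D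
    using cases[OF that(1)] cases[OF that(2)] by auto
  moreover have "C \<subseteq> I \<and> C \<noteq> {}" if "C \<in> cherry I p q" for C
    using cases[OF that] assms(2,3) by auto
  moreover have "{x} \<in> cherry I p q" if "x \<in> I" for x
    using that unfolding cherry_def bot_forest_def by blast
  ultimately show ?thesis using assms(1) unfolding forest_def by blast
qed

lemma inner_vs_cherry: "p \<noteq> q \<Longrightarrow> inner_vs (cherry I p q) = {{p, q}}"
  unfolding inner_vs_def cherry_def bot_forest_def by auto

lemma is_parent_cherry:
  assumes "p \<noteq> q" and "is_parent (cherry I p q) C P"
  shows "P = {p, q} \<and> (C = {p} \<or> C = {q})"
  using assms unfolding is_parent_def cherry_def bot_forest_def by auto

lemma same_tree_cherry:
  assumes "same_tree (cherry I p q) C C'" and "C \<in> cherry I p q" and "C' \<in> cherry I p q" and "C \<noteq> C'"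
  shows "C \<in> {{p}, {q}, {p, q}} \<and> C' \<in> {{p}, {q}, {p, q}}"
  using assms unfolding same_tree_def cherry_def bot_forest_def by auto

text \<open>The inner vertex of the cherry goes to the least cluster of G containing p and q.\<close>
lemma cherry_le:
  assumes G: "forest I G" and "p \<in> I" and "q \<in> I" and "p \<noteq> q" and "D \<in> G" and "{p, q} \<subseteq> D"
  shows "forest_le I (cherry I p q) G"
proof -
  let ?K = "cherry I p q" and ?H = "lca G {p, q}"
  define \<phi> where "\<phi> C = (if C = {p, q} then ?H else C)" for C
  have K: "forest I ?K" using forest_cherry[OF forest_finite[OF G] assms(2-4)] .
  have "{p, q} \<noteq> {}" by simp
  note H = lca_mem[OF G this assms(5,6)] subset_lca[OF G this assms(5,6)] lca_le[OF G this assms(5,6)]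
  have \<phi>_singleton: "\<phi> {x} = {x}" for x unfolding \<phi>_def using assms(4) by (auto simp: doubleton_eq_iff)
  have \<phi>_pq: "\<phi> {p, q} = ?H" unfolding \<phi>_def by simp
  have par: "is_parent ?K {p} {p, q}" "is_parent ?K {q} {p, q}"
    using assms(2-4) unfolding is_parent_def cherry_def bot_forest_def by auto
  have edge_leaf: "X \<in> G \<and> C \<subseteq> X \<and> X \<subset> ?H"
    if "X \<in> edge_image ?K G \<phi> C" and "is_parent ?K C {p, q}" and "\<phi> C = C" for X C
    using that \<phi>_pq unfolding edge_image_def by force
  have edge_root: "?H \<subseteq> X" if "X \<in> edge_image ?K G \<phi> {p, q}" for X
    using that \<phi>_pq unfolding edge_image_def by force
  have "edge_image ?K G \<phi> C \<inter> edge_image ?K G \<phi> C' = {}"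
    if "C \<in> ?K" "C' \<in> ?K" "C \<noteq> C'" "same_tree ?K C C'" for C C'
  proof -
    have "X \<notin> edge_image ?K G \<phi> C" if "X \<in> edge_image ?K G \<phi> C'"
      and "C \<in> {{p}, {q}, {p, q}}" and "C' \<in> {{p}, {q}, {p, q}}" and "C \<noteq> C'" for X C C'
    proof
      assume "X \<in> edge_image ?K G \<phi> C"
      then show False
        using that edge_leaf[OF _ par(1) \<phi>_singleton] edge_leaf[OF _ par(2) \<phi>_singleton]
          edge_root H(3)[of X] by fastforce
    qed
    then show ?thesis using same_tree_cherry[OF that(4,1,2,3)] that(3) by blast
  qed
  moreover have "2 \<le> card ?H"
    using card_mono[OF forest_finite_cluster[OF G H(1)] H(2)] assms(4) by simp
  ultimately have "forest_map I ?K G \<phi>"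
    unfolding forest_map_def
  proof (intro conjI ballI allI impI)
    show "\<phi> C \<in> G" if "C \<in> ?K" for C
      using that H(1) \<phi>_singleton \<phi>_pq forest_singleton[OF G] unfolding cherry_def bot_forest_def by auto
    show "\<phi> C \<in> inner_vs G" if "C \<in> inner_vs ?K" for C
      using that \<open>2 \<le> card ?H\<close> H(1) \<phi>_pq inner_vs_cherry[OF assms(4)] unfolding inner_vs_def by auto
    show "\<phi> C \<subset> \<phi> P" if CP: "is_parent ?K C P" for C P
    proof -
      obtain x where "P = {p, q}" "C = {x}" "x \<in> {p, q}"
        using is_parent_cherry[OF assms(4) CP] by blast
      moreover have "card {x} < card ?H" using \<open>2 \<le> card ?H\<close> by simp
      then have "{x} \<noteq> ?H" by (metis less_irrefl)
      ultimately show ?thesis using \<phi>_singleton \<phi>_pq H(2) by auto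
    qed
  qed (use \<phi>_singleton inner_vs_cherry[OF assms(4)] in auto)
  then show ?thesis unfolding forest_le_def using K G by blast
qed

lemma atom_in_interval: "atom_in I T a \<Longrightarrow> a \<in> interval I T"
  unfolding atom_in_def covers_in_def by blast

lemma atom_in_eq_cherry:
  assumes "tree I T" and "atom_in I T a"
  obtains p q where "p \<in> I" and "q \<in> I" and "p \<noteq> q" and "a = cherry I p q"
proof -
  have T: "forest I T" and "I \<in> T" using assms(1) unfolding tree_def by auto
  have "a \<in> interval I T" and bot_a: "forest_le I (bot_forest I) a" and "bot_forest I \<noteq> a"
    and cover: "\<And>H. H \<in> interval I T \<Longrightarrow> forest_le I (bot_forest I) H \<Longrightarrow> forest_le I H a
      \<Longrightarrow> H = bot_forest I \<or> H = a"
    using assms(2) unfolding atom_in_def covers_in_def by auto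
  have A: "forest I a" using forest_leD(2)[OF bot_a] .
  have "inner_vs a \<noteq> {}" using forest_eq_bot_Un_inner[OF A] \<open>bot_forest I \<noteq> a\<close> by auto
  then obtain C where C: "C \<in> inner_vs a" and min: "\<forall>C'\<in>inner_vs a. C' \<subseteq> C \<longrightarrow> C = C'"
    using finite_has_minimal[OF finite_inner_vs[OF A]] by blast
  then have "C \<in> a" "2 \<le> card C" unfolding inner_vs_def by auto
  then obtain L R where s: "splits a C L R" using forest_splits[OF A] by blast
  have "\<not> 2 \<le> card L" "\<not> 2 \<le> card R"
    using min s unfolding splits_def inner_vs_def by auto
  then obtain p q where "p \<in> I" "L = {p}" "q \<in> I" "R = {q}"
    using forest_singleton_if_card_less[OF A] s unfolding splits_def by metis
  then have "p \<noteq> q" and "C = {p, q}" using s unfolding splits_def by auto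
  have K: "forest I (cherry I p q)"
    using forest_cherry[OF forest_finite[OF A] \<open>p \<in> I\<close> \<open>q \<in> I\<close> \<open>p \<noteq> q\<close>] .
  have "cherry I p q \<subseteq> a"
    using forest_eq_bot_Un_inner[OF A] \<open>C \<in> a\<close> \<open>C = {p, q}\<close> unfolding cherry_def by blast
  then have "forest_le I (cherry I p q) a" using forest_le_if_subset[OF K A] by blast
  moreover have "cherry I p q \<in> interval I T"
    using bot_forest_le[OF K] cherry_le[OF T \<open>p \<in> I\<close> \<open>q \<in> I\<close> \<open>p \<noteq> q\<close> \<open>I \<in> T\<close>]
      \<open>p \<in> I\<close> \<open>q \<in> I\<close> unfolding interval_def by blast
  moreover have "cherry I p q \<noteq> bot_forest I"
    using \<open>p \<noteq> q\<close> unfolding cherry_def bot_forest_def by auto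
  ultimately have "a = cherry I p q" using cover bot_forest_le[OF K] by metis
  then show thesis using that \<open>p \<in> I\<close> \<open>q \<in> I\<close> \<open>p \<noteq> q\<close> by blast
qed

section \<open>Vertex sets inside T\<close>

lemma vT_eq_lca_image:
  assumes "forest_le I F T"
  shows "vT I T F = lca T ` inner_vs F"
  unfolding vT_def
proof (rule the_equality)
  have "\<phi> ` inner_vs F = lca T ` inner_vs F" if "forest_map I F T \<phi>" for \<phi>
    using forest_map_eq_lca[OF forest_leD[OF assms] that] unfolding inner_vs_def by auto
  then show "\<exists>\<phi>. forest_map I F T \<phi> \<and> lca T ` inner_vs F = \<phi> ` inner_vs F"
    "\<And>S. \<exists>\<phi>. forest_map I F T \<phi> \<and> S = \<phi> ` inner_vs F \<Longrightarrow> S = lca T ` inner_vs F"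
    using forest_le_forest_map_lca[OF assms] by metis+
qed

lemma vT_subset_inner_vs:
  assumes "forest_le I F T"
  shows "vT I T F \<subseteq> inner_vs T"
  unfolding vT_eq_lca_image[OF assms] using forest_le_lca_inner[OF assms] by blast

lemma card_vT:
  assumes "forest_le I F T"
  shows "card (vT I T F) = card (inner_vs F)"
  unfolding vT_eq_lca_image[OF assms] by (rule card_image[OF forest_le_inj_on_lca[OF assms]])

lemma vT_bot_forest: "forest I T \<Longrightarrow> vT I T (bot_forest I) = {}"
  using vT_eq_lca_image[OF bot_forest_le, of I T] inner_vs_bot_forest[of I] by simp

lemma vT_cherry:
  assumes "p \<noteq> q" and "forest_le I (cherry I p q) T"
  shows "vT I T (cherry I p q) = {lca T {p, q}}"
  using vT_eq_lca_image[OF assms(2)] inner_vs_cherry[OF assms(1)] by simp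

text \<open>If \<open>lca T C\<close> were strictly below \<open>lca T D\<close> for \<open>D = lca G C\<close>, it would be a cluster of T
  below the image of D meeting both children of D.\<close>
lemma vT_mono:
  assumes FG: "forest_le I F G" and GT: "forest_le I G T" and FT: "forest_le I F T"
  shows "vT I T F \<subseteq> vT I T G"
proof -
  have G: "forest I G" and T: "forest I T" using forest_leD[OF GT] .
  have "lca T C \<in> lca T ` inner_vs G" if C: "C \<in> inner_vs F" for C
  proof -
    let ?D = "lca G C"
    have "C \<in> F" using C unfolding inner_vs_def by simp
    then have "C \<noteq> {}" "C \<subseteq> ?D"
      using forest_nonempty[OF forest_leD(1)[OF FG]] forest_le_subset_lca[OF FG] by auto
    have D: "?D \<in> inner_vs G" using forest_le_lca_inner[OF FG C] .
    then have "?D \<in> G" "2 \<le> card ?D" unfolding inner_vs_def by auto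
    then obtain A B where s: "splits G ?D A B" using forest_splits[OF G] by blast
    then have "A \<in> G" "B \<in> G" "A \<union> B = ?D" "A \<noteq> ?D" "B \<noteq> ?D" unfolding splits_def by auto
    moreover have "\<not> C \<subseteq> A" "\<not> C \<subseteq> B"
      using lca_le[OF G \<open>C \<noteq> {}\<close> \<open>?D \<in> G\<close> \<open>C \<subseteq> ?D\<close> \<open>A \<in> G\<close>]
        lca_le[OF G \<open>C \<noteq> {}\<close> \<open>?D \<in> G\<close> \<open>C \<subseteq> ?D\<close> \<open>B \<in> G\<close>] calculation by auto
    ultimately have "C \<inter> A \<noteq> {}" "C \<inter> B \<noteq> {}" using \<open>C \<subseteq> ?D\<close> by blast+
    have \<psi>: "forest_map I G T (lca T)" using forest_le_forest_map_lca[OF GT] .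
    have "A \<subseteq> lca T A" "B \<subseteq> lca T B" "?D \<subseteq> lca T ?D" "lca T ?D \<in> T"
      using forest_le_subset_lca[OF GT \<open>A \<in> G\<close>] forest_le_subset_lca[OF GT \<open>B \<in> G\<close>]
        forest_le_subset_lca[OF GT \<open>?D \<in> G\<close>] forest_le_lca_mem[OF GT \<open>?D \<in> G\<close>] .
    then have "C \<subseteq> lca T ?D" using \<open>C \<subseteq> ?D\<close> by blast
    note lcaC = lca_mem[OF T \<open>C \<noteq> {}\<close> \<open>lca T ?D \<in> T\<close> this] subset_lca[OF T \<open>C \<noteq> {}\<close> \<open>lca T ?D \<in> T\<close> this]
      lca_le[OF T \<open>C \<noteq> {}\<close> \<open>lca T ?D \<in> T\<close> this]
    have "lca T C = lca T ?D"
    proof (rule ccontr)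
      assume "lca T C \<noteq> lca T ?D"
      then have "lca T C \<subset> lca T ?D" using lcaC(3)[OF \<open>lca T ?D \<in> T\<close> \<open>C \<subseteq> lca T ?D\<close>] by blast
      then have "lca T C \<inter> A = {} \<or> lca T C \<inter> B = {}"
        using forest_map_no_cluster_across_children[OF G T \<psi> \<open>?D \<in> G\<close> s
            \<open>A \<subseteq> lca T A\<close> \<open>B \<subseteq> lca T B\<close> lcaC(1)] by blast
      then show False using lcaC(2) \<open>C \<inter> A \<noteq> {}\<close> \<open>C \<inter> B \<noteq> {}\<close> by blast
    qed
    then show ?thesis using D by (rule image_eqI)
  qed
  then show ?thesis unfolding vT_eq_lca_image[OF GT] vT_eq_lca_image[OF FT] by blast
qed

definition vertex_ideal :: "'a set set \<Rightarrow> 'a set set \<Rightarrow> bool" where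
  "vertex_ideal T S \<longleftrightarrow> S \<subseteq> inner_vs T \<and> (\<forall>D\<in>S. \<forall>E\<in>inner_vs T. E \<subseteq> D \<longrightarrow> E \<in> S)"

lemma vertex_ideal_subset_forest:
  assumes GT: "forest_le I G T" and ideal: "vertex_ideal T S" and "S \<subseteq> vT I T G"
  shows "S \<subseteq> G"
proof
  fix D assume "D \<in> S"
  show "D \<in> G"
  proof (rule mem_forest_if_inner_below_covered[OF GT forest_leD(2)[OF GT]])
    show "D \<in> T" using ideal \<open>D \<in> S\<close> unfolding vertex_ideal_def inner_vs_def by blast
    show "{E \<in> inner_vs T. E \<subseteq> D} \<subseteq> lca T ` inner_vs G"
      using ideal \<open>D \<in> S\<close> assms(3) vT_eq_lca_image[OF GT] unfolding vertex_ideal_def by auto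
  qed
qed

lemma inner_vs_eq_vT_if_ideal:
  assumes FT: "forest_le I F T" and "vertex_ideal T (vT I T F)"
  shows "inner_vs F = vT I T F"
proof -
  have "vT I T F \<subseteq> F" using vertex_ideal_subset_forest[OF FT assms(2)] by blast
  then have "vT I T F \<subseteq> inner_vs F"
    using vT_subset_inner_vs[OF FT] unfolding inner_vs_def by blast
  then show ?thesis
    using card_subset_eq[OF finite_inner_vs[OF forest_leD(1)[OF FT]]] card_vT[OF FT] by metis
qed

lemma forest_le_if_ideal_vT_subset:
  assumes FT: "forest_le I F T" and GT: "forest_le I G T"
    and "vertex_ideal T (vT I T F)" and "vT I T F \<subseteq> vT I T G"
  shows "forest_le I F G"
proof (rule forest_le_if_subset)
  show F: "forest I F" and G: "forest I G" using forest_leD FT GT by blast+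
  have "inner_vs F \<subseteq> G"
    using vertex_ideal_subset_forest[OF GT assms(3) assms(4)] inner_vs_eq_vT_if_ideal[OF FT assms(3)]
    by simp
  then show "F \<subseteq> G" using forest_eq_bot_Un_inner[OF F] forest_eq_bot_Un_inner[OF G] by blast
qed

lemma vT_atom:
  assumes "tree I T" and "atom_in I T a"
  shows "vT I T a = {elabel I T (bot_forest I) a}"
proof -
  obtain p q where "p \<noteq> q" and a: "a = cherry I p q" using atom_in_eq_cherry[OF assms] by metis
  have "forest_le I a T" using atom_in_interval[OF assms(2)] unfolding interval_def by blast
  then have "vT I T a = {lca T {p, q}}" using vT_cherry[OF \<open>p \<noteq> q\<close>] a by simp
  moreover have "vT I T (bot_forest I) = {}"
    using vT_bot_forest assms(1) unfolding tree_def by blast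
  ultimately show ?thesis unfolding elabel_def by simp
qed

lemma atom_le_if_vT_subset:
  assumes "tree I T" and "atom_in I T a" and FT: "forest_le I F T"
    and "vertex_ideal T (vT I T F)" and "vT I T a \<subseteq> vT I T F"
  shows "forest_le I a F"
proof -
  obtain p q where "p \<in> I" "q \<in> I" "p \<noteq> q" and a: "a = cherry I p q"
    using atom_in_eq_cherry[OF assms(1,2)] by metis
  have "forest_le I a T" using atom_in_interval[OF assms(2)] unfolding interval_def by blast
  then have "lca T {p, q} \<in> inner_vs F"
    using vT_cherry[OF \<open>p \<noteq> q\<close>] a assms(5) inner_vs_eq_vT_if_ideal[OF FT assms(4)] by simp
  moreover have "{p, q} \<subseteq> lca T {p, q}"
    using subset_lca[of I T "{p, q}" I] \<open>p \<in> I\<close> \<open>q \<in> I\<close> assms(1) unfolding tree_def by simp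
  ultimately show ?thesis
    using cherry_le[OF forest_leD(1)[OF FT] \<open>p \<in> I\<close> \<open>q \<in> I\<close> \<open>p \<noteq> q\<close>] a
    unfolding inner_vs_def by blast
qed

lemma join_in_eq_if_vT_eq_UN:
  assumes "tree I T" and F: "F \<in> interval I T" and ideal: "vertex_ideal T (vT I T F)"
    and atoms: "\<forall>a\<in>A. atom_in I T a" and vT_F: "vT I T F = (\<Union>a\<in>A. vT I T a)"
  shows "join_in I T A = F"
  unfolding join_in_def
proof (rule the_equality)
  have FT: "forest_le I F T" using F unfolding interval_def by blast
  have upper: "\<forall>a\<in>A. forest_le I a F"
    using atom_le_if_vT_subset[OF assms(1) _ FT ideal] atoms vT_F by blast
  have least: "forest_le I F w" if "w \<in> interval I T" and "\<forall>a\<in>A. forest_le I a w" for w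
  proof (rule forest_le_if_ideal_vT_subset[OF FT _ ideal])
    show wT: "forest_le I w T" using that(1) unfolding interval_def by blast
    have "vT I T a \<subseteq> vT I T w" if "a \<in> A" for a
      using vT_mono[of I a w T] that wT atoms \<open>\<forall>a\<in>A. forest_le I a w\<close> atom_in_interval
      unfolding interval_def by blast
    then show "vT I T F \<subseteq> vT I T w" using vT_F by blast
  qed
  show "F \<in> interval I T \<and> (\<forall>a\<in>A. forest_le I a F)
    \<and> (\<forall>w\<in>interval I T. (\<forall>a\<in>A. forest_le I a w) \<longrightarrow> forest_le I F w)"
    using F upper least by blast
  show "z = F" if "z \<in> interval I T \<and> (\<forall>a\<in>A. forest_le I a z)
    \<and> (\<forall>w\<in>interval I T. (\<forall>a\<in>A. forest_le I a w) \<longrightarrow> forest_le I z w)" for z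
    using that forest_le_antisym least F upper by blast
qed

section \<open>The increasing maximal chain\<close>

lemma card_inner_vs_less_if_covers:
  assumes "covers_in I T F G"
  shows "card (inner_vs F) < card (inner_vs G)"
proof -
  have "forest_le I F G" and "F \<noteq> G" using assms unfolding covers_in_def by auto
  then show ?thesis
    using card_inner_vs_le forest_eq_if_card_inner_vs_eq le_neq_implies_less by metis
qed

lemma vT_eq_insert_elabel:
  assumes "forest_le I F G" and "forest_le I G T" and "forest_le I F T"
    and "card (inner_vs G) = Suc (card (inner_vs F))"
  shows "vT I T G = insert (elabel I T F G) (vT I T F)"
proof -
  have sub: "vT I T F \<subseteq> vT I T G" using vT_mono[OF assms(1-3)] .
  have "finite (vT I T G)"
    using finite_subset[OF vT_subset_inner_vs[OF assms(2)] finite_inner_vs[OF forest_leD(2)[OF assms(2)]]] .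
  then have "card (vT I T G - vT I T F) = 1"
    using card_Diff_subset[OF finite_subset[OF sub] sub] card_vT[OF assms(2)] card_vT[OF assms(3)] assms(4)
    by simp
  then obtain e where e: "vT I T G - vT I T F = {e}" using card_1_singletonE by blast
  then have "elabel I T F G = e" unfolding elabel_def by simp
  then show ?thesis using e sub by blast
qed

lemma nat_eq_if_strict_mono_between:
  fixes f :: "nat \<Rightarrow> nat"
  assumes mono: "\<And>k. a \<le> k \<Longrightarrow> k < b \<Longrightarrow> f k < f (Suc k)"
    and "a \<le> f a" and "f b \<le> b" and "a \<le> k" and "k \<le> b"
  shows "f k = k"
proof -
  have gap: "f j + (l - j) \<le> f l" if "a \<le> j" "j \<le> l" "l \<le> b" for j l
    using that(2,3)
  proof (induction l rule: dec_induct)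
    case (step l)
    then show ?case using mono[of l] that(1) by simp
  qed simp
  show ?thesis using gap[of a k] gap[of k b] assms(2-5) by simp
qed

lemma vertex_ideal_label_prefix:
  assumes "nice_order T lab n"
  shows "vertex_ideal T {v \<in> inner_vs T. lab v \<le> i}"
proof -
  have "lab E \<le> lab D" if "D \<in> inner_vs T" "E \<in> inner_vs T" "E \<subseteq> D" for D E
    using assms that unfolding nice_order_def by blast
  then show ?thesis unfolding vertex_ideal_def by (auto intro: le_trans)
qed

lemma UN_vT_Bset:
  assumes "tree I T" and nice: "nice_order T lab n" and "\<forall>j\<in>{1..i}. a j \<in> Bset I T lab j"
  shows "(\<Union>j\<in>{1..i}. vT I T (a j)) = {v \<in> inner_vs T. lab v \<le> i}"
proof -
  have "bij_betw lab (inner_vs T) {1..n}" using nice unfolding nice_order_def by blast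
  then have lab_inj: "inj_on lab (inner_vs T)" and lab_range: "lab ` inner_vs T = {1..n}"
    by (auto simp: bij_betw_def)
  define e where "e j = elabel I T (bot_forest I) (a j)" for j
  have vT_a: "vT I T (a j) = {e j}" and e_inner: "e j \<in> inner_vs T" and lab_e: "lab (e j) = j"
    if "j \<in> {1..i}" for j
  proof -
    have "atom_in I T (a j)" and "lab (e j) = j"
      using assms(3) that unfolding Bset_def e_def by auto
    moreover have "forest_le I (a j) T"
      using atom_in_interval[OF \<open>atom_in I T (a j)\<close>] unfolding interval_def by blast
    moreover have "vT I T (a j) = {e j}" using vT_atom[OF assms(1) \<open>atom_in I T (a j)\<close>] unfolding e_def .
    ultimately show "vT I T (a j) = {e j}" and "e j \<in> inner_vs T" and "lab (e j) = j"
      using vT_subset_inner_vs[of I "a j" T] by auto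
  qed
  show ?thesis
  proof
    show "(\<Union>j\<in>{1..i}. vT I T (a j)) \<subseteq> {v \<in> inner_vs T. lab v \<le> i}"
      using vT_a e_inner lab_e by auto
  next
    show "{v \<in> inner_vs T. lab v \<le> i} \<subseteq> (\<Union>j\<in>{1..i}. vT I T (a j))"
    proof
      fix v assume v: "v \<in> {v \<in> inner_vs T. lab v \<le> i}"
      then have "lab v \<in> lab ` inner_vs T" by blast
      then have j: "lab v \<in> {1..i}" using lab_range v by auto
      then have "e (lab v) = v"
        using e_inner[OF j] lab_e[OF j] lab_inj v unfolding inj_on_def by auto
      then show "v \<in> (\<Union>j\<in>{1..i}. vT I T (a j))" using vT_a[OF j] j by auto
    qed
  qed
qed

locale increasing_chain =
  fixes I :: "'a set" and T :: "'a set set" and lab :: "'a set \<Rightarrow> nat"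
    and n :: nat and x :: "nat \<Rightarrow> 'a set set"
  assumes tree: "tree I T" and card_inner_vs_T: "card (inner_vs T) = n"
    and nice: "nice_order T lab n"
    and x0: "x 0 = bot_forest I" and xn: "x n = T"
    and covers: "\<And>k. k \<in> {1..n} \<Longrightarrow> covers_in I T (x (k - 1)) (x k)"
    and increasing: "\<And>k. k \<in> {1..<n} \<Longrightarrow>
      lab (elabel I T (x (k - 1)) (x k)) < lab (elabel I T (x k) (x (k + 1)))"
begin

lemma forest_T: "forest I T"
  using tree unfolding tree_def by blast

lemma x_in_interval:
  assumes "k \<le> n"
  shows "x k \<in> interval I T"
proof (cases k)
  case 0
  have "forest I (bot_forest I)" using forest_bot_forest[OF forest_finite[OF forest_T]] .
  then show ?thesis
    using 0 x0 bot_forest_le[OF forest_T] bot_forest_le[of I "bot_forest I"] unfolding interval_def by simp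
next
  case (Suc j)
  then show ?thesis using covers[of k] assms unfolding covers_in_def by simp
qed

lemma x_le_T: "k \<le> n \<Longrightarrow> forest_le I (x k) T"
  using x_in_interval unfolding interval_def by blast

lemma x_le_x_Suc: "k < n \<Longrightarrow> forest_le I (x k) (x (Suc k))"
  using covers[of "Suc k"] unfolding covers_in_def by simp

lemma card_inner_vs_x: "k \<le> n \<Longrightarrow> card (inner_vs (x k)) = k"
proof (rule nat_eq_if_strict_mono_between[of 0 n "\<lambda>k. card (inner_vs (x k))"])
  show "card (inner_vs (x k)) < card (inner_vs (x (Suc k)))" if "k < n" for k
    using card_inner_vs_less_if_covers covers[of "Suc k"] that by simp
qed (use x0 xn card_inner_vs_T inner_vs_bot_forest in auto)

lemma vT_x_Suc:
  assumes "k < n"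
  shows "vT I T (x (Suc k)) = insert (elabel I T (x k) (x (Suc k))) (vT I T (x k))"
  using vT_eq_insert_elabel[OF x_le_x_Suc x_le_T x_le_T] card_inner_vs_x assms by simp

lemma lab_elabel_x:
  assumes "k < n"
  shows "lab (elabel I T (x k) (x (Suc k))) = Suc k"
proof -
  let ?f = "\<lambda>j. lab (elabel I T (x (j - 1)) (x j))"
  have "?f j \<in> {1..n}" if j: "j \<in> {1..n}" for j
  proof -
    obtain j' where j': "j = Suc j'" "j' < n" using j by (cases j) auto
    have "elabel I T (x (j - 1)) (x j) \<in> vT I T (x j)"
      using vT_x_Suc[OF j'(2)] j'(1) by simp
    then have "elabel I T (x (j - 1)) (x j) \<in> inner_vs T"
      using vT_subset_inner_vs[OF x_le_T, of j] j by auto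
    then show ?thesis using nice unfolding nice_order_def bij_betw_def by blast
  qed
  moreover have "?f j < ?f (Suc j)" if "1 \<le> j" "j < n" for j
    using increasing[of j] that by simp
  ultimately have "?f (Suc k) = Suc k"
    using nat_eq_if_strict_mono_between[of 1 n ?f "Suc k"] assms by fastforce
  then show ?thesis by simp
qed

lemma vT_x: "k \<le> n \<Longrightarrow> vT I T (x k) = {v \<in> inner_vs T. lab v \<le> k}"
proof (induction k)
  case 0
  have bij: "bij_betw lab (inner_vs T) {1..n}" using nice unfolding nice_order_def by blast
  have "\<not> lab v \<le> 0" if "v \<in> inner_vs T" for v
    using bij_betw_apply[OF bij that] by simp
  then have "{v \<in> inner_vs T. lab v \<le> 0} = {}" by blast
  then show ?case using vT_bot_forest[OF forest_T] x0 by simp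
next
  case (Suc k)
  then have "k < n" by simp
  let ?e = "elabel I T (x k) (x (Suc k))"
  have "?e \<in> inner_vs T"
    using vT_x_Suc[OF \<open>k < n\<close>] vT_subset_inner_vs[OF x_le_T[OF Suc.prems]] by blast
  have inj: "inj_on lab (inner_vs T)" using nice unfolding nice_order_def bij_betw_def by blast
  have "{v \<in> inner_vs T. lab v \<le> Suc k} = insert ?e {v \<in> inner_vs T. lab v \<le> k}"
  proof (intro set_eqI iffI)
    fix v assume v: "v \<in> {v \<in> inner_vs T. lab v \<le> Suc k}"
    show "v \<in> insert ?e {v \<in> inner_vs T. lab v \<le> k}"
    proof (cases "lab v = Suc k")
      case True
      then have "v = ?e"
        using inj_onD[OF inj _ _ \<open>?e \<in> inner_vs T\<close>] v lab_elabel_x[OF \<open>k < n\<close>] by simp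
      then show ?thesis by simp
    qed (use v in simp)
  qed (use \<open>?e \<in> inner_vs T\<close> lab_elabel_x[OF \<open>k < n\<close>] in auto)
  then show ?case using vT_x_Suc[OF \<open>k < n\<close>] Suc.IH \<open>k < n\<close> by simp
qed

end

theorem lemma5p4:
  fixes I :: "'a set" and T :: "'a set set" and lab :: "'a set \<Rightarrow> nat"
    and n i :: nat and x a :: "nat \<Rightarrow> 'a set set"
  assumes "finite I" and "tree I T" and "card (inner_vs T) = n"
    and "nice_order T lab n"
    and "x 0 = bot_forest I" and "x n = T"
    and "\<forall>k\<in>{1..n}. covers_in I T (x (k - 1)) (x k)"
    and "\<forall>k\<in>{1..<n}. lab (elabel I T (x (k - 1)) (x k)) < lab (elabel I T (x k) (x (k + 1)))"
    and "i \<in> {1..n}"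
    and "\<forall>j\<in>{1..i}. a j \<in> Bset I T lab j"
  shows "x i = join_in I T (a ` {1..i})"
proof -
  interpret increasing_chain I T lab n x
    using assms(2-8) by unfold_locales auto
  have "i \<le> n" using assms(9) by simp
  have "join_in I T (a ` {1..i}) = x i"
  proof (rule join_in_eq_if_vT_eq_UN[OF tree x_in_interval[OF \<open>i \<le> n\<close>]])
    show "vertex_ideal T (vT I T (x i))"
      using vT_x[OF \<open>i \<le> n\<close>] vertex_ideal_label_prefix[OF nice] by simp
    show "\<forall>s\<in>a ` {1..i}. atom_in I T s" using assms(10) unfolding Bset_def by auto
    show "vT I T (x i) = (\<Union>s\<in>a ` {1..i}. vT I T s)"
      using vT_x[OF \<open>i \<le> n\<close>] UN_vT_Bset[OF tree nice assms(10)] by simp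
  qed
  then show ?thesis by simp
qed

end
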